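(* Let $\Delta$ be a tight SID and $\phi$ a tight sentence over $\Delta$. For every model $(\alpha,m)$ of $\phi$ (i.e. $(\alpha,m)\models_\Delta\phi$), the architecture $\alpha$ is tight.
   Context: Signature $\Sigma=(\mathfrak C,\mathfrak I,\mathfrak P)$: component types $\mathfrak C$, interaction types $\mathfrak I$ with arities $\#(\mathsf I)$, pairwise disjoint port sets $\mathfrak P(\mathsf C)$, port tuples $\mathfrak P(\mathsf I)$ of length $\#(\mathsf I)$; $\langle\mathfrak P(\mathsf I)\rangle_k$ is its $k$-th port. An architecture $\alpha$ gives $\alpha(\mathsf C)\subseteq\mathbb U$, $\alpha(\mathsf I)\subseteq\mathbb U^{\#(\mathsf I)}$. CL formulas $\phi::=\mathsf{emp}\mid\mathsf C(x)\mid\mathsf C^q(x)\mid\mathsf I(x_1..x_k)\mid\mathsf A(x_1..x_n)\mid\phi*\phi\mid\exists x.\phi$; SID = finite set of rules $\mathsf A(x_1..x_n)\leftarrow\phi$ with $\mathrm{fv}(\phi)=\{x_1..x_n\}$; $(\alpha,m)\models^s_\Delta\phi$ is the least relation where atoms $\mathsf C(x)$/$\mathsf C^q(x)$ denote the single component $\mathsf C[s(x)]$ with marking $\{q[s(x)]\}$ (for some/the given state $q$), $\mathsf I(\vec x)$ the single interaction $\mathsf I[s(\vec x)]$ with empty marking, $\mathsf{emp}$ the empty configuration, predicate atoms unfold by rules, $*$ is union of configurations with disjoint component sets and disjoint interaction relations, and $\exists$ chooses a value. An architecture $\alpha$ is tight if for each $\langle u_1..u_k\rangle\in\alpha(\mathsf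 I)$ and each $k'\in[1,k]$, $u_{k'}\in\alpha(\mathsf C)$ for the unique $\mathsf C$ with $\langle\mathfrak P(\mathsf I)\rangle_{k'}\in\mathfrak P(\mathsf C)$. A profile $\lambda$ maps each predicate symbol $\mathsf A$ of nonzero arity to a tuple of component types of length $\#(\mathsf A)$. A formula $\phi$ is tight for $\lambda$ if for every interaction atom $\mathsf I(x_1..x_k)$ of $\phi$ and every $j\in[1,k]$, $\phi$ contains a component atom $\mathsf C^q(x_j)$ with $\langle\mathfrak P(\mathsf I)\rangle_j\in\mathfrak P(\mathsf C)$, or a predicate atom $\mathsf A(y_1..y_n)$ with $x_j=y_\ell$ and $\langle\mathfrak P(\mathsf I)\rangle_j\in\mathfrak P(\langle\lambda(\mathsf A)\rangle_\ell)$ for some $\ell$. A SID $\Delta$ is tight if there is a profile $\lambda_\Delta$ such that for each rule $\mathsf A(x_1..x_n)\leftarrow\phi$, $\phi$ is tight for $\lambda_\Delta$ and for each $j\in[1,n]$, $\phi$ contains a component atom $\mathsf C^q(x_j)$ with $\langle\lambda_\Delta(\mathsf A)\rangle_j=\mathsf C$, or a predicate atom $\mathsf B(y_1..y_r)$ with $x_j=y_\ell$ and $\langle\lambda_\Delta(\mathsf A)\rangle_j=\langle\lambda_\Delta(\mathsf B)\rangle_\ell$ for some $\ell$. A formula over a tight SID $\Delta$ is tight if it is tight for $\lambda_\Delta$. *)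

theory Defs
  imports Main
begin

record ('c, 'i, 'p, 'q) signature =
  comps  :: "'c set"
  inters :: "'i set"
  iarity :: "'i \<Rightarrow> nat"
  cports :: "'c \<Rightarrow> 'p set"
  iports :: "'i \<Rightarrow> 'p list"
  cstates :: "'c \<Rightarrow> 'q set"

definition wf_sig :: "('c, 'i, 'p, 'q) signature \<Rightarrow> bool" where
  "wf_sig S \<longleftrightarrow>
     (\<forall>C1\<in>comps S. \<forall>C2\<in>comps S. C1 \<noteq> C2 \<longrightarrow> cports S C1 \<inter> cports S C2 = {}) \<and>
     (\<forall>I\<in>inters S. length (iports S I) = iarity S I) \<and>
     (\<forall>I\<in>inters S. \<forall>p\<in>set (iports S I). \<exists>C\<in>comps S. p \<in> cports S C)"

record ('c, 'i, 'u) arch =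
  acomp :: "'c \<Rightarrow> 'u set"
  ainter :: "'i \<Rightarrow> 'u list set"

definition is_arch :: "('c, 'i, 'p, 'q) signature \<Rightarrow> ('c, 'i, 'u) arch \<Rightarrow> bool" where
  "is_arch S \<alpha> \<longleftrightarrow>
     (\<forall>C. C \<notin> comps S \<longrightarrow> acomp \<alpha> C = {}) \<and>
     (\<forall>I. I \<notin> inters S \<longrightarrow> ainter \<alpha> I = {}) \<and>
     (\<forall>I\<in>inters S. \<forall>t\<in>ainter \<alpha> I. length t = iarity S I)"

definition tight_arch :: "('c, 'i, 'p, 'q) signature \<Rightarrow> ('c, 'i, 'u) arch \<Rightarrow> bool" where
  "tight_arch S \<alpha> \<longleftrightarrow>
     (\<forall>I\<in>inters S. \<forall>t\<in>ainter \<alpha> I. \<forall>k<length t. \<forall>C\<in>comps S.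
        k < length (iports S I) \<longrightarrow> iports S I ! k \<in> cports S C \<longrightarrow> t ! k \<in> acomp \<alpha> C)"

definition empty_arch :: "('c, 'i, 'u) arch" where
  "empty_arch = \<lparr>acomp = (\<lambda>_. {}), ainter = (\<lambda>_. {})\<rparr>"

definition comp_arch :: "'c \<Rightarrow> 'u \<Rightarrow> ('c, 'i, 'u) arch" where
  "comp_arch C u = \<lparr>acomp = (\<lambda>_. {})(C := {u}), ainter = (\<lambda>_. {})\<rparr>"

definition inter_arch :: "'i \<Rightarrow> 'u list \<Rightarrow> ('c, 'i, 'u) arch" where
  "inter_arch I t = \<lparr>acomp = (\<lambda>_. {}), ainter = (\<lambda>_. {})(I := {t})\<rparr>"

definition arch_union :: "('c, 'i, 'u) arch \<Rightarrow> ('c, 'i, 'u) arch \<Rightarrow> ('c, 'i, 'u) arch" where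
  "arch_union a b = \<lparr>acomp = (\<lambda>C. acomp a C \<union> acomp b C),
                     ainter = (\<lambda>I. ainter a I \<union> ainter b I)\<rparr>"

text \<open>Disjoint component sets (components are pairs C[u]) and disjoint interaction relations.\<close>
definition arch_disjoint :: "('c, 'i, 'u) arch \<Rightarrow> ('c, 'i, 'u) arch \<Rightarrow> bool" where
  "arch_disjoint a b \<longleftrightarrow>
     (\<forall>C. acomp a C \<inter> acomp b C = {}) \<and> (\<forall>I. ainter a I \<inter> ainter b I = {})"

datatype ('c, 'i, 'q, 'a, 'v) form =
    Emp
  | Comp 'c 'v
  | CompQ 'c 'q 'v
  | Inter 'i "'v list"
  | Pred 'a "'v list"
  | Sep "('c, 'i, 'q, 'a, 'v) form" "('c, 'i, 'q, 'a, 'v) form"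
  | Ex 'v "('c, 'i, 'q, 'a, 'v) form"

fun fv :: "('c, 'i, 'q, 'a, 'v) form \<Rightarrow> 'v set" where
  "fv Emp = {}"
| "fv (Comp C x) = {x}"
| "fv (CompQ C q x) = {x}"
| "fv (Inter I xs) = set xs"
| "fv (Pred A xs) = set xs"
| "fv (Sep f g) = fv f \<union> fv g"
| "fv (Ex x f) = fv f - {x}"

fun bvs :: "('c, 'i, 'q, 'a, 'v) form \<Rightarrow> 'v list" where
  "bvs (Sep f g) = bvs f @ bvs g"
| "bvs (Ex x f) = x # bvs f"
| "bvs _ = []"

fun atoms :: "('c, 'i, 'q, 'a, 'v) form \<Rightarrow> ('c, 'i, 'q, 'a, 'v) form set" where
  "atoms (Sep f g) = atoms f \<union> atoms g"
| "atoms (Ex x f) = atoms f"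
| "atoms f = {f}"

text \<open>Standard variable convention: bound variables are pairwise distinct and
  distinct from the free variables (so that "contains an atom with variable x"
  refers to the same variable occurrence scope).\<close>
definition clean :: "('c, 'i, 'q, 'a, 'v) form \<Rightarrow> bool" where
  "clean f \<longleftrightarrow> distinct (bvs f) \<and> set (bvs f) \<inter> fv f = {}"

fun wf_form :: "('c, 'i, 'p, 'q) signature \<Rightarrow> ('a \<Rightarrow> nat) \<Rightarrow> ('c, 'i, 'q, 'a, 'v) form \<Rightarrow> bool" where
  "wf_form S par Emp = True"
| "wf_form S par (Comp C x) = (C \<in> comps S)"
| "wf_form S par (CompQ C q x) = (C \<in> comps S \<and> q \<in> cstates S C)"
| "wf_form S par (Inter I xs) = (I \<in> inters S \<and> length xs = iarity S I)"
| "wf_form S par (Pred A xs) = (length xs = par A)"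
| "wf_form S par (Sep f g) = (wf_form S par f \<and> wf_form S par g)"
| "wf_form S par (Ex x f) = wf_form S par f"

type_synonym ('c, 'i, 'q, 'a, 'v) sid = "('a \<times> 'v list \<times> ('c, 'i, 'q, 'a, 'v) form) set"

text \<open>A rule (A, [x1..xn], phi) stands for A(x1..xn) <- phi; par gives the arities #(A).\<close>
definition wf_sid :: "('c, 'i, 'p, 'q) signature \<Rightarrow> ('a \<Rightarrow> nat) \<Rightarrow> ('c, 'i, 'q, 'a, 'v) sid \<Rightarrow> bool" where
  "wf_sid S par D \<longleftrightarrow> finite D \<and>
     (\<forall>(A, xs, f)\<in>D. distinct xs \<and> length xs = par A \<and> fv f = set xs \<and>
                     wf_form S par f \<and> clean f)"

inductive sat :: "('c, 'i, 'p, 'q) signature \<Rightarrow> ('c, 'i, 'q, 'a, 'v) sid \<Rightarrow>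
    ('c, 'i, 'u) arch \<Rightarrow> ('q \<times> 'u) set \<Rightarrow> ('v \<Rightarrow> 'u) \<Rightarrow> ('c, 'i, 'q, 'a, 'v) form \<Rightarrow> bool"
  for S D where
  sat_emp: "sat S D empty_arch {} s Emp"
| sat_comp: "q \<in> cstates S C \<Longrightarrow> sat S D (comp_arch C (s x)) {(q, s x)} s (Comp C x)"
| sat_compq: "sat S D (comp_arch C (s x)) {(q, s x)} s (CompQ C q x)"
| sat_inter: "sat S D (inter_arch I (map s xs)) {} s (Inter I xs)"
| sat_pred: "\<lbrakk>(A, xs, f) \<in> D; length ys = length xs;
              \<forall>i<length xs. s' (xs ! i) = s (ys ! i); sat S D \<alpha> m s' f\<rbrakk>
             \<Longrightarrow> sat S D \<alpha> m s (Pred A ys)"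
| sat_sep: "\<lbrakk>sat S D \<alpha>1 m1 s f; sat S D \<alpha>2 m2 s g; arch_disjoint \<alpha>1 \<alpha>2\<rbrakk>
             \<Longrightarrow> sat S D (arch_union \<alpha>1 \<alpha>2) (m1 \<union> m2) s (Sep f g)"
| sat_ex: "sat S D \<alpha> m (s(x := u)) f \<Longrightarrow> sat S D \<alpha> m s (Ex x f)"

definition has_comp_atom :: "('c, 'i, 'q, 'a, 'v) form \<Rightarrow> 'c \<Rightarrow> 'v \<Rightarrow> bool" where
  "has_comp_atom f C x \<longleftrightarrow> Comp C x \<in> atoms f \<or> (\<exists>q. CompQ C q x \<in> atoms f)"

definition is_profile :: "('c, 'i, 'p, 'q) signature \<Rightarrow> ('a \<Rightarrow> nat) \<Rightarrow> ('a \<Rightarrow> 'c list) \<Rightarrow> bool" where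
  "is_profile S par lam \<longleftrightarrow> (\<forall>A. length (lam A) = par A \<and> set (lam A) \<subseteq> comps S)"

definition tight_for :: "('c, 'i, 'p, 'q) signature \<Rightarrow> ('a \<Rightarrow> 'c list) \<Rightarrow>
    ('c, 'i, 'q, 'a, 'v) form \<Rightarrow> bool" where
  "tight_for S lam f \<longleftrightarrow>
     (\<forall>I xs. Inter I xs \<in> atoms f \<longrightarrow> (\<forall>j<length xs.
        (\<exists>C\<in>comps S. has_comp_atom f C (xs ! j) \<and> iports S I ! j \<in> cports S C) \<or>
        (\<exists>A ys l. Pred A ys \<in> atoms f \<and> l < length ys \<and> xs ! j = ys ! l \<and>
                  iports S I ! j \<in> cports S (lam A ! l))))"

definition tight_sid_with :: "('c, 'i, 'p, 'q) signature \<Rightarrow> ('a \<Rightarrow> nat) \<Rightarrow> ('a \<Rightarrow> 'c list) \<Rightarrow>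
    ('c, 'i, 'q, 'a, 'v) sid \<Rightarrow> bool" where
  "tight_sid_with S par lam D \<longleftrightarrow> is_profile S par lam \<and>
     (\<forall>(A, xs, f)\<in>D. tight_for S lam f \<and>
        (\<forall>j<length xs.
          has_comp_atom f (lam A ! j) (xs ! j) \<or>
          (\<exists>B ys l. Pred B ys \<in> atoms f \<and> l < length ys \<and> xs ! j = ys ! l \<and>
                    lam A ! j = lam B ! l)))"

definition tight_sid :: "('c, 'i, 'p, 'q) signature \<Rightarrow> ('a \<Rightarrow> nat) \<Rightarrow>
    ('c, 'i, 'q, 'a, 'v) sid \<Rightarrow> bool" where
  "tight_sid S par D \<longleftrightarrow> (\<exists>lam. tight_sid_with S par lam D)"

end

theory Submission
  imports Defs
begin

text \<open>Induction over satisfaction produces a valuation of the bound variables under which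
  every component atom C(x) and every predicate atom A(y) of the formula is realized in the
  model, the l-th argument of A(y) as a component of the profile type lam A ! l; tightness
  of the SID is exactly what keeps this invariant when a predicate atom is unfolded. Every
  interaction of the model either instantiates an interaction atom of the formula or was
  created inside an unfolding, where it is already tight. For the remaining ones, tightness
  of the formula covers each port by a realized component atom or predicate parameter, and
  since port sets are pairwise disjoint, its type is the one the port demands.\<close>

definition tight_interaction ::
    "('c, 'i, 'p, 'q) signature \<Rightarrow> ('c, 'i, 'u) arch \<Rightarrow> 'i \<Rightarrow> 'u list \<Rightarrow> bool" where
  "tight_interaction S \<alpha> I t \<longleftrightarrow> (\<forall>k<length t. \<forall>C\<in>comps S.
     k < length (iports S I) \<longrightarrow> iports S I ! k \<in> cports S C \<longrightarrow> t ! k \<in> acomp \<alpha> C)"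

lemma tight_interaction_mono:
  "\<lbrakk>tight_interaction S \<alpha> I t; \<And>C. acomp \<alpha> C \<subseteq> acomp \<beta> C\<rbrakk> \<Longrightarrow> tight_interaction S \<beta> I t"
  unfolding tight_interaction_def by blast

lemma tight_archI:
  "(\<And>I t. t \<in> ainter \<alpha> I \<Longrightarrow> tight_interaction S \<alpha> I t) \<Longrightarrow> tight_arch S \<alpha>"
  unfolding tight_arch_def tight_interaction_def by blast

definition atoms_realized ::
    "('c, 'i, 'p, 'q) signature \<Rightarrow> ('a \<Rightarrow> 'c list) \<Rightarrow> ('c, 'i, 'u) arch \<Rightarrow> ('v \<Rightarrow> 'u) \<Rightarrow>
     ('c, 'i, 'q, 'a, 'v) form \<Rightarrow> bool" where
  "atoms_realized S lam \<alpha> s f \<longleftrightarrow>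
    (\<forall>C x. has_comp_atom f C x \<longrightarrow> s x \<in> acomp \<alpha> C) \<and>
    (\<forall>A ys. Pred A ys \<in> atoms f \<longrightarrow> (\<forall>j<length ys. s (ys ! j) \<in> acomp \<alpha> (lam A ! j))) \<and>
    (\<forall>I. \<forall>t\<in>ainter \<alpha> I.
       (\<exists>xs. Inter I xs \<in> atoms f \<and> t = map s xs) \<or> tight_interaction S \<alpha> I t)"

lemma Pred_atom_length: "\<lbrakk>wf_form S par f; Pred A ys \<in> atoms f\<rbrakk> \<Longrightarrow> length ys = par A"
  by (induction f) auto

lemma Inter_atom_vars: "Inter I xs \<in> atoms f \<Longrightarrow> set xs \<subseteq> fv f \<union> set (bvs f)"
  by (induction f) auto

lemma Pred_atom_vars: "Pred A ys \<in> atoms f \<Longrightarrow> set ys \<subseteq> fv f \<union> set (bvs f)"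
  by (induction f) auto

lemma comp_atom_var: "has_comp_atom f C x \<Longrightarrow> x \<in> fv f \<union> set (bvs f)"
  unfolding has_comp_atom_def by (induction f) auto

lemma has_comp_atom_Sep:
  "has_comp_atom (Sep f g) C x \<longleftrightarrow> has_comp_atom f C x \<or> has_comp_atom g C x"
  unfolding has_comp_atom_def by auto

lemma clean_SepD: "clean (Sep f g) \<Longrightarrow> clean f \<and> clean g"
  unfolding clean_def by auto

lemma clean_ExD: "clean (Ex x f) \<Longrightarrow> clean f"
  unfolding clean_def by auto

lemma atoms_realized_cong:
  assumes "\<And>x. x \<in> fv f \<union> set (bvs f) \<Longrightarrow> s x = s' x"
    and "atoms_realized S lam \<alpha> s f"
  shows "atoms_realized S lam \<alpha> s' f"
proof -
  have "map s xs = map s' xs" if "Inter I xs \<in> atoms f" for I xs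
    using Inter_atom_vars[OF that] assms(1) by (auto intro: map_cong)
  moreover have "s (ys ! j) = s' (ys ! j)" if "Pred A ys \<in> atoms f" "j < length ys" for A ys j
    using Pred_atom_vars[OF that(1)] that(2) assms(1) nth_mem by blast
  moreover have "s x = s' x" if "has_comp_atom f C x" for C x
    using comp_atom_var[OF that] assms(1) by blast
  ultimately show ?thesis
    using assms(2) unfolding atoms_realized_def by metis
qed

lemma acomp_arch_union [simp]: "acomp (arch_union \<alpha>1 \<alpha>2) C = acomp \<alpha>1 C \<union> acomp \<alpha>2 C"
  and ainter_arch_union [simp]: "ainter (arch_union \<alpha>1 \<alpha>2) I = ainter \<alpha>1 I \<union> ainter \<alpha>2 I"
  by (simp_all add: arch_union_def)

lemma atoms_realized_Sep:
  assumes f: "atoms_realized S lam \<alpha>1 s f" and g: "atoms_realized S lam \<alpha>2 s g"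
  shows "atoms_realized S lam (arch_union \<alpha>1 \<alpha>2) s (Sep f g)"
proof -
  have sub1: "acomp \<alpha>1 C \<subseteq> acomp (arch_union \<alpha>1 \<alpha>2) C"
    and sub2: "acomp \<alpha>2 C \<subseteq> acomp (arch_union \<alpha>1 \<alpha>2) C" for C
    by auto
  have "(\<exists>xs. Inter I xs \<in> atoms (Sep f g) \<and> t = map s xs) \<or>
        tight_interaction S (arch_union \<alpha>1 \<alpha>2) I t"
    if t: "t \<in> ainter (arch_union \<alpha>1 \<alpha>2) I" for I t
  proof -
    from t consider "t \<in> ainter \<alpha>1 I" | "t \<in> ainter \<alpha>2 I"
      by auto
    then show ?thesis
    proof cases
      case 1
      with f have "(\<exists>xs. Inter I xs \<in> atoms f \<and> t = map s xs) \<or> tight_interaction S \<alpha>1 I t"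
        unfolding atoms_realized_def by blast
      then show ?thesis
        using tight_interaction_mono[OF _ sub1] by auto
    next
      case 2
      with g have "(\<exists>xs. Inter I xs \<in> atoms g \<and> t = map s xs) \<or> tight_interaction S \<alpha>2 I t"
        unfolding atoms_realized_def by blast
      then show ?thesis
        using tight_interaction_mono[OF _ sub2] by auto
    qed
  qed
  then show ?thesis
    using f g unfolding atoms_realized_def has_comp_atom_Sep by auto
qed

lemma atoms_realized_Sep_merge:
  assumes clean: "clean (Sep f g)"
    and s1: "\<forall>x. x \<notin> set (bvs f) \<longrightarrow> s1 x = s x" "atoms_realized S lam \<alpha>1 s1 f"
    and s2: "\<forall>x. x \<notin> set (bvs g) \<longrightarrow> s2 x = s x" "atoms_realized S lam \<alpha>2 s2 g"
  shows "\<exists>s'. (\<forall>x. x \<notin> set (bvs (Sep f g)) \<longrightarrow> s' x = s x) \<and>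
    atoms_realized S lam (arch_union \<alpha>1 \<alpha>2) s' (Sep f g)"
proof -
  define s' where "s' x = (if x \<in> set (bvs f) then s1 x else s2 x)" for x
  have apart: "set (bvs f) \<inter> set (bvs g) = {}" "set (bvs f) \<inter> fv g = {}" "set (bvs g) \<inter> fv f = {}"
    using clean unfolding clean_def by auto
  have "s1 x = s' x" if "x \<in> fv f \<union> set (bvs f)" for x
  proof (cases "x \<in> set (bvs f)")
    case False
    with that apart(3) have "x \<notin> set (bvs g)" by blast
    then have "s2 x = s x" using s2(1) by blast
    moreover have "s1 x = s x" using False s1(1) by blast
    ultimately show ?thesis using False by (simp add: s'_def)
  qed (simp add: s'_def)
  with s1(2) have realized_f: "atoms_realized S lam \<alpha>1 s' f"
    by (rule atoms_realized_cong[rotated])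
  have "s2 x = s' x" if "x \<in> fv g \<union> set (bvs g)" for x
  proof -
    from that apart(1,2) have "x \<notin> set (bvs f)" by blast
    then show ?thesis by (simp add: s'_def)
  qed
  with s2(2) have realized_g: "atoms_realized S lam \<alpha>2 s' g"
    by (rule atoms_realized_cong[rotated])
  show ?thesis
  proof (intro exI[where x = s'] conjI allI impI)
    fix x assume x: "x \<notin> set (bvs (Sep f g))"
    then have "s1 x = s x" "s2 x = s x" using s1(1) s2(1) by simp_all
    with x show "s' x = s x" by (simp add: s'_def)
  qed (rule atoms_realized_Sep[OF realized_f realized_g])
qed

lemma atoms_realized_Ex:
  "atoms_realized S lam \<alpha> s (Ex x f) \<longleftrightarrow> atoms_realized S lam \<alpha> s f"
  unfolding atoms_realized_def has_comp_atom_def by simp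

lemma tight_sid_with_ruleD:
  assumes "tight_sid_with S par lam D" and "(A, xs, f) \<in> D"
  shows "tight_for S lam f"
    and "\<And>j. j < length xs \<Longrightarrow> has_comp_atom f (lam A ! j) (xs ! j) \<or>
           (\<exists>B ys l. Pred B ys \<in> atoms f \<and> l < length ys \<and> xs ! j = ys ! l \<and>
                     lam A ! j = lam B ! l)"
proof -
  have "\<forall>(A, xs, f)\<in>D. tight_for S lam f \<and>
          (\<forall>j<length xs. has_comp_atom f (lam A ! j) (xs ! j) \<or>
            (\<exists>B ys l. Pred B ys \<in> atoms f \<and> l < length ys \<and> xs ! j = ys ! l \<and>
                      lam A ! j = lam B ! l))"
    using assms(1) unfolding tight_sid_with_def by (rule conjunct2)
  from bspec[OF this assms(2)] show "tight_for S lam f"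
    and "\<And>j. j < length xs \<Longrightarrow> has_comp_atom f (lam A ! j) (xs ! j) \<or>
           (\<exists>B ys l. Pred B ys \<in> atoms f \<and> l < length ys \<and> xs ! j = ys ! l \<and>
                     lam A ! j = lam B ! l)"
    by simp_all
qed

lemma rule_param_realized:
  assumes "tight_sid_with S par lam D" and "(A, xs, f) \<in> D"
    and realized: "atoms_realized S lam \<alpha> s f" and "j < length xs"
  shows "s (xs ! j) \<in> acomp \<alpha> (lam A ! j)"
  using tight_sid_with_ruleD(2)[OF assms(1,2,4)]
proof
  assume "has_comp_atom f (lam A ! j) (xs ! j)"
  with realized show ?thesis unfolding atoms_realized_def by blast
next
  assume "\<exists>B ys l. Pred B ys \<in> atoms f \<and> l < length ys \<and> xs ! j = ys ! l \<and> lam A ! j = lam B ! l"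
  then obtain B ys l where "Pred B ys \<in> atoms f" "l < length ys" "xs ! j = ys ! l" "lam A ! j = lam B ! l"
    by blast
  with realized show ?thesis unfolding atoms_realized_def by auto
qed

lemma Inter_atom_tight:
  assumes sig: "wf_sig S" and prof: "is_profile S par lam" and wf: "wf_form S par f"
    and tight: "tight_for S lam f" and real: "atoms_realized S lam \<alpha> s f"
    and atom: "Inter I xs \<in> atoms f"
  shows "tight_interaction S \<alpha> I (map s xs)"
  unfolding tight_interaction_def
proof (intro allI impI ballI)
  fix k C assume k: "k < length (map s xs)" and C: "C \<in> comps S"
    and port: "iports S I ! k \<in> cports S C"
  have same_type: "C' = C" if "C' \<in> comps S" "iports S I ! k \<in> cports S C'" for C'
    using sig C port that unfolding wf_sig_def by blast
  have "\<forall>j<length xs.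
          (\<exists>C\<in>comps S. has_comp_atom f C (xs ! j) \<and> iports S I ! j \<in> cports S C) \<or>
          (\<exists>A ys l. Pred A ys \<in> atoms f \<and> l < length ys \<and> xs ! j = ys ! l \<and>
                    iports S I ! j \<in> cports S (lam A ! l))"
    using tight atom unfolding tight_for_def by blast
  with k consider
      C' where "C' \<in> comps S" "has_comp_atom f C' (xs ! k)" "iports S I ! k \<in> cports S C'"
    | B ys l where "Pred B ys \<in> atoms f" "l < length ys" "xs ! k = ys ! l"
        "iports S I ! k \<in> cports S (lam B ! l)"
    by auto
  then have "s (xs ! k) \<in> acomp \<alpha> C"
  proof cases
    case 1
    with real have "s (xs ! k) \<in> acomp \<alpha> C'"
      unfolding atoms_realized_def by blast
    with 1 show ?thesis using same_type by blast
  next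
    case 2
    have "lam B ! l \<in> comps S"
      using prof Pred_atom_length[OF wf 2(1)] 2(2) unfolding is_profile_def by (metis nth_mem subsetD)
    moreover have "s (ys ! l) \<in> acomp \<alpha> (lam B ! l)"
      using real 2(1,2) unfolding atoms_realized_def by blast
    ultimately show ?thesis using 2(3,4) same_type by metis
  qed
  with k show "map s xs ! k \<in> acomp \<alpha> C" by simp
qed

lemma interactions_tight_if_atoms_realized:
  assumes "wf_sig S" and "is_profile S par lam" and "wf_form S par f"
    and "tight_for S lam f" and "atoms_realized S lam \<alpha> s f"
    and "t \<in> ainter \<alpha> I"
  shows "tight_interaction S \<alpha> I t"
proof -
  have "(\<exists>xs. Inter I xs \<in> atoms f \<and> t = map s xs) \<or> tight_interaction S \<alpha> I t"
    using assms(5,6) unfolding atoms_realized_def by blast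
  then show ?thesis
  proof
    assume "\<exists>xs. Inter I xs \<in> atoms f \<and> t = map s xs"
    then obtain xs where "Inter I xs \<in> atoms f" "t = map s xs" by blast
    then show ?thesis using Inter_atom_tight[OF assms(1-5)] by simp
  qed
qed

lemma sat_clean_atoms_realized:
  assumes sig: "wf_sig S" and sid: "wf_sid S par D" and tsid: "tight_sid_with S par lam D"
  shows "\<lbrakk>sat S D \<alpha> m s f; clean f\<rbrakk> \<Longrightarrow>
    \<exists>s'. (\<forall>x. x \<notin> set (bvs f) \<longrightarrow> s' x = s x) \<and> atoms_realized S lam \<alpha> s' f"
proof (induction rule: sat.induct)
  case (sat_emp s)
  have "atoms_realized S lam empty_arch s Emp"
    unfolding atoms_realized_def has_comp_atom_def empty_arch_def by simp
  then show ?case by auto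
next
  case (sat_comp q C s x)
  have "atoms_realized S lam (comp_arch C (s x)) s (Comp C x)"
    unfolding atoms_realized_def has_comp_atom_def comp_arch_def by simp
  then show ?case by auto
next
  case (sat_compq C s x q)
  have "atoms_realized S lam (comp_arch C (s x)) s (CompQ C q x)"
    unfolding atoms_realized_def has_comp_atom_def comp_arch_def by simp
  then show ?case by auto
next
  case (sat_inter I s xs)
  have "atoms_realized S lam (inter_arch I (map s xs)) s (Inter I xs)"
    unfolding atoms_realized_def has_comp_atom_def inter_arch_def by simp
  then show ?case by auto
next
  case (sat_pred A xs f ys s' s \<alpha> m)
  have body: "fv f = set xs" "wf_form S par f" "clean f"
    using sid sat_pred.hyps(1) unfolding wf_sid_def by auto
  have prof: "is_profile S par lam"
    using tsid unfolding tight_sid_with_def by simp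
  obtain s'' where s'': "\<forall>x. x \<notin> set (bvs f) \<longrightarrow> s'' x = s' x" "atoms_realized S lam \<alpha> s'' f"
    using sat_pred.IH body(3) by blast
  have "s (ys ! j) \<in> acomp \<alpha> (lam A ! j)" if j: "j < length ys" for j
  proof -
    have "xs ! j \<notin> set (bvs f)"
      using body(1,3) j sat_pred.hyps(2) unfolding clean_def by auto
    then have "s'' (xs ! j) = s (ys ! j)"
      using s''(1) sat_pred.hyps(2,3) j by simp
    then show ?thesis
      using rule_param_realized[OF tsid sat_pred.hyps(1) s''(2)] j sat_pred.hyps(2) by metis
  qed
  moreover have "tight_interaction S \<alpha> I t" if "t \<in> ainter \<alpha> I" for I t
    using interactions_tight_if_atoms_realized[OF sig prof body(2)
        tight_sid_with_ruleD(1)[OF tsid sat_pred.hyps(1)] s''(2) that] .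
  ultimately have "atoms_realized S lam \<alpha> s (Pred A ys)"
    unfolding atoms_realized_def has_comp_atom_def by simp
  then show ?case by auto
next
  case (sat_sep \<alpha>1 m1 s f \<alpha>2 m2 g)
  obtain s1 where "\<forall>x. x \<notin> set (bvs f) \<longrightarrow> s1 x = s x" "atoms_realized S lam \<alpha>1 s1 f"
    using sat_sep.IH(1) clean_SepD[OF sat_sep.prems] by blast
  moreover obtain s2 where "\<forall>x. x \<notin> set (bvs g) \<longrightarrow> s2 x = s x" "atoms_realized S lam \<alpha>2 s2 g"
    using sat_sep.IH(2) clean_SepD[OF sat_sep.prems] by blast
  ultimately show ?case
    using atoms_realized_Sep_merge[OF sat_sep.prems] by blast
next
  case (sat_ex \<alpha> m s x u f)
  obtain s' where s': "\<forall>y. y \<notin> set (bvs f) \<longrightarrow> s' y = (s(x := u)) y"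
      "atoms_realized S lam \<alpha> s' f"
    using sat_ex.IH clean_ExD[OF sat_ex.prems] by blast
  show ?case
  proof (intro exI[where x = s'] conjI allI impI)
    fix y assume "y \<notin> set (bvs (Ex x f))"
    then show "s' y = s y" using s'(1) by simp
  qed (simp add: atoms_realized_Ex s'(2))
qed

theorem mainTheorem7:
  fixes S :: "('c, 'i, 'p, 'q) signature"
    and par :: "'a \<Rightarrow> nat"
    and D :: "('c, 'i, 'q, 'a, 'v) sid"
    and lam :: "'a \<Rightarrow> 'c list"
    and phi :: "('c, 'i, 'q, 'a, 'v) form"
    and \<alpha> :: "('c, 'i, 'u) arch"
    and m :: "('q \<times> 'u) set"
    and s :: "'v \<Rightarrow> 'u"
  assumes "wf_sig S"
    and "wf_sid S par D"
    and "tight_sid_with S par lam D"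
    and "wf_form S par phi" and "clean phi" and "fv phi = {}"
    and "tight_for S lam phi"
    and "is_arch S \<alpha>"
    and "sat S D \<alpha> m s phi"
  shows "tight_arch S \<alpha>"
proof -
  obtain s' where "atoms_realized S lam \<alpha> s' phi"
    using sat_clean_atoms_realized[OF assms(1-3,9,5)] by blast
  moreover have "is_profile S par lam"
    using assms(3) unfolding tight_sid_with_def by simp
  ultimately show ?thesis
    using interactions_tight_if_atoms_realized[OF assms(1) _ assms(4,7)] by (metis tight_archI)
qed

end
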